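(* Let $V$ be a family of representations of $\mathcal G_K$ over $S$, $r\ge r_0$, and write $\mathbf D^r=\mathbf D^r_L$, $\mathbf D^{pr}=\mathbf D^{pr}_L$. Let $M_0=(\mathbf D^r)^{\varphi=1}=\{z\in\mathbf D^r:\varphi(z)=z\}$ and $N=\mathbf D^{pr}/(\varphi-1)\mathbf D^r$ (both $G_\infty$-modules). For a $G_\infty$-module $M$ let $f_M(m)=((\gamma-1)m,(\tau-1)m)$ and $g_M(a,b)=(\tau-1)a+(1-\delta^{-1}\gamma)b$. Let $d_0,d_1,d_2$ be the maps $d_0(a)=((\varphi-1)a,(\gamma-1)a,(\tau-1)a)$ on $\mathbf D^r$, $d_1(a,b,c)=((\gamma-1)a+(1-\varphi)b,(\tau-1)a+(1-\varphi)c,(\tau-1)b+(1-\delta^{-1}\gamma)c)$ on $\mathbf D^{pr}\oplus\mathbf D^r\oplus\mathbf D^r$, and $d_2(a,b,c)=(\tau-1)a+(1-\delta^{-1}\gamma)b+(\varphi-1)c$ on $\mathbf D^{pr}\oplus\mathbf D^{pr}\oplus\mathbf D^r$. Then the sequence $$0\to\frac{\ker g_{M_0}}{\mathrm{im}\,f_{M_0}}\xrightarrow{\delta_1}\frac{\ker d_1}{\mathrm{im}\,d_0}\xrightarrow{\delta_2}N^{\tau=1,\gamma=1}\xrightarrow{\delta_3}\frac{M_0}{(\tau-1)M_0+(1-\delta^{-1}\gamma)M_0}\xrightarrow{\delta_4}\frac{\ker d_2}{\mathrm{im}\,d_1}\xrightarrow{\delta_5}\frac{\ker g_N}{\mathrm{im}\,f_N}\to0$$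 is well defined and exact, where $\delta_1(y,z)=(0,y,z)$, $\delta_2(x,y,z)=x$, $\delta_3(x)=(\tau-1)y_x+(1-\delta^{-1}\gamma)z_x$ for any $y_x,z_x\in\mathbf D^r$ with $(\gamma-1)x=(\varphi-1)y_x$ and $(\tau-1)x=(\varphi-1)z_x$, $\delta_4(z)=(0,0,z)$, and $\delta_5(x,y,z)=(x,y)$ (all on classes).
   Context: Let $p$ be an odd prime, $K/\mathbf Q_p$ finite with uniformizer $\pi$ and residue field $k$; $\overline K$, $\mathbf C_p$, $\mathcal O_{\mathbf C_p}$, tilt $\mathbf C_p^\flat$ with $v^\flat(x)=v_p(x^\sharp)$. Fix $\pi_0=\pi$, $\pi_{n+1}^p=\pi_n$ and compatible primitive $p^n$-th roots of unity $\epsilon_n$; $K_\infty=\bigcup K(\pi_n)$, $K_{\mathrm{cycl}}=\bigcup K(\epsilon_n)$, $L=K_\infty K_{\mathrm{cycl}}$, $\mathcal G_K=\mathrm{Gal}(\overline K/K)$, $H_\infty=\mathrm{Gal}(\overline K/L)$, $G_\infty=\mathrm{Gal}(L/K)$, $H_{\tau,K}=\mathrm{Gal}(\overline K/K_\infty)$, $\chi$ cyclotomic character, $c(g)\in\mathbf Z_p$ given by $g(\pi_n)=\epsilon_n^{c(g)}\pi_n$. $\gamma$ is a topological generator of $\mathrm{Gal}(L/K_\infty)$, $\tau\in\mathrm{Gal}(L/K_{\mathrm{cycl}})$ with $c(\tau)=1$; $g\tau g^{-1}=\tau^{\chi(g)}$ for $g\in\mathrm{Gal}(L/K_\infty)$.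 $\delta=\frac{\tau^{\chi(\gamma)}-1}{\tau-1}$ is the limit of $1+\tau+\dots+\tau^{\chi_n-1}$, $\chi_n\in\mathbf Z_{>0}$, $\chi_n\to\chi(\gamma)$; it is invertible. Rings: $\tilde{\mathbf A}=W(\mathbf C_p^\flat)$, $\tilde{\mathbf B}=\tilde{\mathbf A}[1/p]$ with Frobenius $\varphi$, $\mathcal G_K$-action; $\tilde{\mathbf B}^{\dagger,r}=\{\sum_{n\gg-\infty}p^n[x_n]: v^\flat(x_n)+\frac{pr}{p-1}n\to\infty\}$; $\mathbf A_{\tau,K}$ the $p$-adic completion of $W(k)[[u]][1/u]$ embedded via $u\mapsto[(\pi_n)_n]$, $\mathbf B_{\tau,K}=\mathbf A_{\tau,K}[1/p]$, $\mathbf B^{\dagger,r}_{\tau,K}=\mathbf B_{\tau,K}\cap\tilde{\mathbf B}^{\dagger,r}$, $\tilde{\mathbf B}^{\dagger,r}_L=(\tilde{\mathbf B}^{\dagger,r})^{H_\infty}$. $S$ is a $\mathbf Q_p$-Banach algebra whose residue fields at maximal ideals are finite over $\mathbf Q_p$; $\hat\otimes$ is over $\mathbf Q_p$. A family of representations is a free $S$-module $V$ of finite rank with continuous $S$-linear $\mathcal G_K$-action. There exist $r_0>0$ and, for $r\ge r_0$, compatible locally free $S\hat\otimes\mathbf B^{\dagger,r}_{\tau,K}$-modules $D^{\dagger,r}_{\tau,K}(V)$ inside $((S\hat\otimes\tilde{\mathbf B}^{\dagger,r})\otimes_SV)^{H_{\tau,K}}$, with $\varphi\otimes 1$ mapping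 level $r$ into level $pr$, and $(S\hat\otimes\tilde{\mathbf B}^{\dagger,r})\otimes D^{\dagger,r}_{\tau,K}(V)\cong(S\hat\otimes\tilde{\mathbf B}^{\dagger,r})\otimes_SV$. $\mathbf D^r_L=(S\hat\otimes\tilde{\mathbf B}^{\dagger,r}_L)\otimes_{S\hat\otimes\mathbf B^{\dagger,r}_{\tau,K}}D^{\dagger,r}_{\tau,K}(V)$ is, via this isomorphism, an $H_\infty$-fixed $\mathcal G_K$-stable submodule of $(S\hat\otimes\tilde{\mathbf B}^{\dagger,r})\otimes_SV$, hence a $G_\infty$-module, and $\varphi=\varphi\otimes1:\mathbf D^r_L\to\mathbf D^{pr}_L$ commutes with $G_\infty$. *)

theory Defs
  imports Main "HOL-Library.Product_Plus"
begin

text \<open>All modules live in one ambient abelian group 'm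
  (in the paper: (S \<hat>\<otimes> B~dagger) \<otimes>_S V).  Dr, Dpr are the subgroups D^r_L \<subseteq> D^{pr}_L;
  gam, tau, dlt, dinv are the actions of gamma, tau, delta, delta^{-1}; phi is Frobenius.
  Subquotients Z/B are represented by pairs of sets (cycles Z, boundaries B);
  maps between subquotients are given on representatives by relations.\<close>

definition subgrp :: "'a::ab_group_add set \<Rightarrow> bool" where
  "subgrp A \<longleftrightarrow> 0 \<in> A \<and> (\<forall>x\<in>A. \<forall>y\<in>A. x + y \<in> A \<and> - x \<in> A)"

definition subquot :: "'a::ab_group_add set \<Rightarrow> 'a set \<Rightarrow> bool" where
  "subquot Z B \<longleftrightarrow> subgrp Z \<and> subgrp B \<and> B \<subseteq> Z"

definition wd_map :: "'a::ab_group_add set \<Rightarrow> 'a set \<Rightarrow> 'b::ab_group_add set \<Rightarrow> 'b set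
    \<Rightarrow> ('a \<Rightarrow> 'b \<Rightarrow> bool) \<Rightarrow> bool" where
  "wd_map Z1 B1 Z2 B2 R \<longleftrightarrow> subquot Z1 B1 \<and> subquot Z2 B2
     \<and> (\<forall>x\<in>Z1. \<exists>y. R x y)
     \<and> (\<forall>x\<in>Z1. \<forall>y. R x y \<longrightarrow> y \<in> Z2)
     \<and> (\<forall>x\<in>Z1. \<forall>x'\<in>Z1. \<forall>y y'. R x y \<and> R x' y' \<and> x - x' \<in> B1 \<longrightarrow> y - y' \<in> B2)
     \<and> (\<forall>x\<in>Z1. \<forall>x'\<in>Z1. \<forall>y y'. R x y \<and> R x' y' \<longrightarrow> R (x + x') (y + y'))"

definition inj_cls :: "'a::ab_group_add set \<Rightarrow> 'a set \<Rightarrow> 'b::ab_group_add set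
    \<Rightarrow> ('a \<Rightarrow> 'b \<Rightarrow> bool) \<Rightarrow> bool" where
  "inj_cls Z1 B1 B2 R \<longleftrightarrow> (\<forall>x\<in>Z1. \<forall>y. R x y \<and> y \<in> B2 \<longrightarrow> x \<in> B1)"

definition surj_cls :: "'a::ab_group_add set \<Rightarrow> 'b::ab_group_add set \<Rightarrow> 'b set
    \<Rightarrow> ('a \<Rightarrow> 'b \<Rightarrow> bool) \<Rightarrow> bool" where
  "surj_cls Z1 Z2 B2 R \<longleftrightarrow> (\<forall>w\<in>Z2. \<exists>x\<in>Z1. \<exists>w'. R x w' \<and> w - w' \<in> B2)"

definition exact_at :: "'a::ab_group_add set \<Rightarrow> ('a \<Rightarrow> 'b \<Rightarrow> bool)
    \<Rightarrow> 'b::ab_group_add set \<Rightarrow> 'b set \<Rightarrow> ('b \<Rightarrow> 'c \<Rightarrow> bool) \<Rightarrow> 'c::ab_group_add set \<Rightarrow> bool" where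
  "exact_at ZX R ZY BY S BW \<longleftrightarrow>
     {y \<in> ZY. \<exists>w. S y w \<and> w \<in> BW} = {y \<in> ZY. \<exists>x\<in>ZX. \<exists>y'. R x y' \<and> y - y' \<in> BY}"

definition M0 :: "'m::ab_group_add set \<Rightarrow> ('m \<Rightarrow> 'm) \<Rightarrow> 'm set" where
  "M0 Dr phi = {z \<in> Dr. phi z = z}"

definition ImPhi :: "'m::ab_group_add set \<Rightarrow> ('m \<Rightarrow> 'm) \<Rightarrow> 'm set" where
  "ImPhi Dr phi = (\<lambda>u. phi u - u) ` Dr"

definition d0 :: "('m::ab_group_add \<Rightarrow> 'm) \<Rightarrow> ('m \<Rightarrow> 'm) \<Rightarrow> ('m \<Rightarrow> 'm) \<Rightarrow> 'm \<Rightarrow> 'm \<times> 'm \<times> 'm" where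
  "d0 phi gam tau a = (phi a - a, gam a - a, tau a - a)"

definition d1 :: "('m::ab_group_add \<Rightarrow> 'm) \<Rightarrow> ('m \<Rightarrow> 'm) \<Rightarrow> ('m \<Rightarrow> 'm) \<Rightarrow> ('m \<Rightarrow> 'm)
    \<Rightarrow> 'm \<times> 'm \<times> 'm \<Rightarrow> 'm \<times> 'm \<times> 'm" where
  "d1 phi gam tau dinv t = (case t of (a, b, c) \<Rightarrow>
     (gam a - a + (b - phi b), tau a - a + (c - phi c), tau b - b + (c - dinv (gam c))))"

definition d2 :: "('m::ab_group_add \<Rightarrow> 'm) \<Rightarrow> ('m \<Rightarrow> 'm) \<Rightarrow> ('m \<Rightarrow> 'm) \<Rightarrow> ('m \<Rightarrow> 'm)
    \<Rightarrow> 'm \<times> 'm \<times> 'm \<Rightarrow> 'm" where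
  "d2 phi gam tau dinv t = (case t of (a, b, c) \<Rightarrow>
     tau a - a + (b - dinv (gam b)) + (phi c - c))"

definition Z_H1M0 where
  "Z_H1M0 Dr phi gam tau dinv =
     {(y, z). y \<in> M0 Dr phi \<and> z \<in> M0 Dr phi \<and> tau y - y + (z - dinv (gam z)) = 0}"
definition B_H1M0 where
  "B_H1M0 Dr phi gam tau = (\<lambda>m. (gam m - m, tau m - m)) ` M0 Dr phi"

definition Z_H1tot where
  "Z_H1tot Dr Dpr phi gam tau dinv = {t \<in> Dpr \<times> Dr \<times> Dr. d1 phi gam tau dinv t = (0, 0, 0)}"
definition B_H1tot where
  "B_H1tot Dr phi gam tau = d0 phi gam tau ` Dr"

text \<open>N^{tau=1,gamma=1} with N = D^{pr}/(phi-1)D^r, as cycles/boundaries in D^{pr}\<close>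
definition Z_H0N where
  "Z_H0N Dr Dpr phi gam tau =
     {x \<in> Dpr. tau x - x \<in> ImPhi Dr phi \<and> gam x - x \<in> ImPhi Dr phi}"

definition B_H2M0 where
  "B_H2M0 Dr phi gam tau dinv =
     {tau y - y + (z - dinv (gam z)) | y z. y \<in> M0 Dr phi \<and> z \<in> M0 Dr phi}"

definition Z_H2tot where
  "Z_H2tot Dr Dpr phi gam tau dinv = {t \<in> Dpr \<times> Dpr \<times> Dr. d2 phi gam tau dinv t = 0}"
definition B_H2tot where
  "B_H2tot Dr Dpr phi gam tau dinv = d1 phi gam tau dinv ` (Dpr \<times> Dr \<times> Dr)"

text \<open>ker g_N and im f_N, lifted to D^{pr} x D^{pr}\<close>
definition Z_H1N where
  "Z_H1N Dr Dpr phi gam tau dinv =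
     {(a, b). a \<in> Dpr \<and> b \<in> Dpr \<and> tau a - a + (b - dinv (gam b)) \<in> ImPhi Dr phi}"
definition B_H1N where
  "B_H1N Dr Dpr phi gam tau =
     {(gam m - m + (phi u - u), tau m - m + (phi v - v)) | m u v. m \<in> Dpr \<and> u \<in> Dr \<and> v \<in> Dr}"

definition R1 :: "'m::ab_group_add \<times> 'm \<Rightarrow> 'm \<times> 'm \<times> 'm \<Rightarrow> bool" where
  "R1 p t \<longleftrightarrow> t = (0, fst p, snd p)"
definition R2 :: "'m::ab_group_add \<times> 'm \<times> 'm \<Rightarrow> 'm \<Rightarrow> bool" where
  "R2 t w \<longleftrightarrow> w = fst t"
definition R3 where
  "R3 Dr phi gam tau dinv x w \<longleftrightarrow> (\<exists>y\<in>Dr. \<exists>z\<in>Dr. gam x - x = phi y - y \<and> tau x - x = phi z - z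
      \<and> w = tau y - y + (z - dinv (gam z)))"
definition R4 :: "'m::ab_group_add \<Rightarrow> 'm \<times> 'm \<times> 'm \<Rightarrow> bool" where
  "R4 z t \<longleftrightarrow> t = (0, 0, z)"
definition R5 :: "'m::ab_group_add \<times> 'm \<times> 'm \<Rightarrow> 'm \<times> 'm \<Rightarrow> bool" where
  "R5 t w \<longleftrightarrow> w = (fst t, fst (snd t))"

end

theory Submission
  imports Defs
begin

(* The complex of the statement is the total complex of the double complex
     K(D^r) --(phi - 1)--> K(D^pr),
   where K(M) is the Koszul complex M --f_M--> M x M --g_M--> M of the pair (gamma, tau).
   K(M) is a complex because gamma tau gamma^-1 = tau^chi(gamma) gives
   delta^-1 gamma (tau - 1) = (tau - 1) gamma, and phi - 1 commutes with f_M and g_M.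
   A double complex with two columns has a six-term exact sequence relating the cohomology of
   the kernel M0 and the cokernel N of phi - 1 to that of the total complex; every exactness
   statement is a diagram chase on representatives.  The only map not induced by an inclusion
   or a projection is delta_3: the pairs (y, z) with (phi - 1) y = (gamma - 1) x and
   (phi - 1) z = (tau - 1) x form a coset of M0 x M0, and g(y, z) is phi-invariant because
   phi - 1 commutes with g. *)

definition additive_on :: "'a::ab_group_add set \<Rightarrow> ('a \<Rightarrow> 'b::ab_group_add) \<Rightarrow> bool" where
  "additive_on A f \<longleftrightarrow> (\<forall>x\<in>A. \<forall>y\<in>A. f (x + y) = f x + f y)"

lemma
  assumes "subgrp A"
  shows subgrp_zero: "0 \<in> A"
    and subgrp_add: "x \<in> A \<Longrightarrow> y \<in> A \<Longrightarrow> x + y \<in> A"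
    and subgrp_uminus: "x \<in> A \<Longrightarrow> - x \<in> A"
    and subgrp_diff: "x \<in> A \<Longrightarrow> y \<in> A \<Longrightarrow> x - y \<in> A"
  using assms unfolding subgrp_def by (metis diff_conv_add_uminus)+

lemma
  assumes "additive_on A f" and "subgrp A"
  shows additive_on_zero: "f 0 = 0"
    and additive_on_uminus: "x \<in> A \<Longrightarrow> f (- x) = - f x"
    and additive_on_diff: "x \<in> A \<Longrightarrow> y \<in> A \<Longrightarrow> f (x - y) = f x - f y"
proof -
  have add: "f (x + y) = f x + f y" if "x \<in> A" "y \<in> A" for x y
    using assms(1) that unfolding additive_on_def by blast
  show zero: "f 0 = 0"
    using add[of 0 0] subgrp_zero[OF assms(2)] by simp
  show uminus: "f (- x) = - f x" if "x \<in> A" for x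
    using add[of x "- x"] zero that subgrp_uminus[OF assms(2)]
    by (simp add: eq_neg_iff_add_eq_0 add.commute)
  show "f (x - y) = f x - f y" if "x \<in> A" "y \<in> A"
    using add[of x "- y"] uminus[of y] that subgrp_uminus[OF assms(2)] by simp
qed

lemma subgrp_Times: "subgrp A \<Longrightarrow> subgrp B \<Longrightarrow> subgrp (A \<times> B)"
  unfolding subgrp_def by (auto simp: zero_prod_def)

lemma subgrp_singleton_zero: "subgrp {0}"
  unfolding subgrp_def by simp

lemma subgrp_image:
  assumes "subgrp A" and "additive_on A f"
  shows "subgrp (f ` A)"
  unfolding subgrp_def
proof (intro conjI ballI)
  show "0 \<in> f ` A"
    using subgrp_zero[OF assms(1)] additive_on_zero[OF assms(2,1)] by (metis image_eqI)
  fix u v assume "u \<in> f ` A" "v \<in> f ` A"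
  then obtain x y where xy: "x \<in> A" "y \<in> A" and "u = f x" "v = f y" by blast
  then have "u + v = f (x + y)" "- u = f (- x)"
    using assms(2) additive_on_uminus[OF assms(2,1)] unfolding additive_on_def by simp_all
  then show "u + v \<in> f ` A" "- u \<in> f ` A"
    using xy subgrp_add[OF assms(1)] subgrp_uminus[OF assms(1)] by simp_all
qed

lemma subgrp_vimage:
  assumes "subgrp A" and "subgrp K" and "additive_on A f"
  shows "subgrp {x \<in> A. f x \<in> K}"
  using assms additive_on_zero[OF assms(3,1)] additive_on_uminus[OF assms(3,1)]
  unfolding subgrp_def additive_on_def by auto

lemma subquot_vimage_image:
  assumes "subgrp A" and "subgrp C" and "subgrp K"
    and "additive_on A f" and "additive_on C g"
    and "f ` A \<subseteq> C" and "\<And>a. a \<in> A \<Longrightarrow> g (f a) \<in> K"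
  shows "subquot {c \<in> C. g c \<in> K} (f ` A)"
  unfolding subquot_def
  using subgrp_vimage[OF assms(2,3,5)] subgrp_image[OF assms(1,4)] assms(6,7) by blast

lemma
  assumes "subquot Z B"
  shows subquot_zero_mem: "0 \<in> B"
    and subquot_uminus_mem: "b \<in> B \<Longrightarrow> - b \<in> B"
    and subquot_add_mem: "z \<in> Z \<Longrightarrow> b \<in> B \<Longrightarrow> z + b \<in> Z"
    and subquot_diff_mem: "z \<in> Z \<Longrightarrow> b \<in> B \<Longrightarrow> z - b \<in> Z"
  using assms subgrp_zero subgrp_uminus subgrp_add subgrp_diff unfolding subquot_def by blast+

lemma wd_map_graph:
  assumes "subquot Z1 B1" and "subquot Z2 B2" and "additive_on Z1 F"
    and "F ` Z1 \<subseteq> Z2" and "F ` B1 \<subseteq> B2" and "\<And>x y. R x y \<longleftrightarrow> y = F x"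
  shows "wd_map Z1 B1 Z2 B2 R"
proof -
  have "F x - F x' \<in> B2" if "x \<in> Z1" "x' \<in> Z1" "x - x' \<in> B1" for x x'
  proof -
    have "F x - F x' = F (x - x')"
      using additive_on_diff[OF assms(3)] assms(1) that unfolding subquot_def by simp
    then show ?thesis using assms(5) that(3) by auto
  qed
  then show ?thesis
    using assms(1-4) unfolding wd_map_def additive_on_def assms(6) by auto
qed

lemma exact_atI:
  assumes "\<And>y w. y \<in> ZY \<Longrightarrow> S y w \<Longrightarrow> w \<in> BW \<Longrightarrow> \<exists>x\<in>ZX. \<exists>y'. R x y' \<and> y - y' \<in> BY"
    and "\<And>y x y'. y \<in> ZY \<Longrightarrow> x \<in> ZX \<Longrightarrow> R x y' \<Longrightarrow> y - y' \<in> BY \<Longrightarrow> \<exists>w. S y w \<and> w \<in> BW"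
  shows "exact_at ZX R ZY BY S BW"
  using assms unfolding exact_at_def by blast

locale phi_tau_module_pair =
  fixes Dr Dpr :: "'m::ab_group_add set"
    and phi gam tau dlt dinv :: "'m \<Rightarrow> 'm"
  assumes Dr_grp: "subgrp Dr" and Dpr_grp: "subgrp Dpr" and incl: "Dr \<subseteq> Dpr"
    and gam_add: "\<forall>x\<in>Dpr. \<forall>y\<in>Dpr. gam (x + y) = gam x + gam y"
    and tau_add: "\<forall>x\<in>Dpr. \<forall>y\<in>Dpr. tau (x + y) = tau x + tau y"
    and dinv_add: "\<forall>x\<in>Dpr. \<forall>y\<in>Dpr. dinv (x + y) = dinv x + dinv y"
    and phi_add: "\<forall>x\<in>Dr. \<forall>y\<in>Dr. phi (x + y) = phi x + phi y"
    and gam_Dr: "gam ` Dr \<subseteq> Dr" and gam_Dpr: "gam ` Dpr \<subseteq> Dpr"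
    and tau_Dr: "tau ` Dr \<subseteq> Dr" and tau_Dpr: "tau ` Dpr \<subseteq> Dpr"
    and dinv_Dr: "dinv ` Dr \<subseteq> Dr" and dinv_Dpr: "dinv ` Dpr \<subseteq> Dpr"
    and phi_Dr: "phi ` Dr \<subseteq> Dpr"
    and dlt_inv: "\<forall>x\<in>Dpr. dinv (dlt x) = x \<and> dlt (dinv x) = x"
    and gam_tau: "\<forall>x\<in>Dpr. gam (tau x - x) = dlt (tau (gam x) - gam x)"
    and phi_comm: "\<forall>x\<in>Dr. phi (gam x) = gam (phi x) \<and> phi (tau x) = tau (phi x)
                          \<and> phi (dlt x) = dlt (phi x)"
begin

abbreviation phi1 :: "'m \<Rightarrow> 'm" where "phi1 u \<equiv> phi u - u"
abbreviation gam1 :: "'m \<Rightarrow> 'm" where "gam1 x \<equiv> gam x - x"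
abbreviation tau1 :: "'m \<Rightarrow> 'm" where "tau1 x \<equiv> tau x - x"
abbreviation koszul_g :: "'m \<Rightarrow> 'm \<Rightarrow> 'm" where "koszul_g a b \<equiv> tau1 a + (b - dinv (gam b))"

lemmas Dr_closed[simp] =
  subgrp_zero[OF Dr_grp] subgrp_add[OF Dr_grp] subgrp_uminus[OF Dr_grp] subgrp_diff[OF Dr_grp]
lemmas Dpr_closed[simp] =
  subgrp_zero[OF Dpr_grp] subgrp_add[OF Dpr_grp] subgrp_uminus[OF Dpr_grp] subgrp_diff[OF Dpr_grp]

lemma Dr_subset_Dpr[simp]: "x \<in> Dr \<Longrightarrow> x \<in> Dpr"
  using incl by blast

lemmas operators_closed[simp] =
  gam_Dr[unfolded image_subset_iff, rule_format] gam_Dpr[unfolded image_subset_iff, rule_format]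
  tau_Dr[unfolded image_subset_iff, rule_format] tau_Dpr[unfolded image_subset_iff, rule_format]
  dinv_Dr[unfolded image_subset_iff, rule_format] dinv_Dpr[unfolded image_subset_iff, rule_format]
  phi_Dr[unfolded image_subset_iff, rule_format]

lemma operators_additive:
  "additive_on Dpr gam" "additive_on Dpr tau" "additive_on Dpr dinv" "additive_on Dr phi"
  using gam_add tau_add dinv_add phi_add unfolding additive_on_def by blast+

lemmas operators_add[simp] =
  gam_add[rule_format] tau_add[rule_format] dinv_add[rule_format] phi_add[rule_format]
lemmas operators_diff[simp] =
  additive_on_diff[OF operators_additive(1) Dpr_grp]
  additive_on_diff[OF operators_additive(2) Dpr_grp]
  additive_on_diff[OF operators_additive(3) Dpr_grp]
  additive_on_diff[OF operators_additive(4) Dr_grp]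
lemmas operators_uminus[simp] =
  additive_on_uminus[OF operators_additive(1) Dpr_grp]
  additive_on_uminus[OF operators_additive(2) Dpr_grp]
  additive_on_uminus[OF operators_additive(3) Dpr_grp]
  additive_on_uminus[OF operators_additive(4) Dr_grp]
lemmas operators_zero[simp] =
  additive_on_zero[OF operators_additive(1) Dpr_grp]
  additive_on_zero[OF operators_additive(2) Dpr_grp]
  additive_on_zero[OF operators_additive(3) Dpr_grp]
  additive_on_zero[OF operators_additive(4) Dr_grp]

lemma phi_commute[simp]:
  assumes "x \<in> Dr"
  shows "phi (gam x) = gam (phi x)" and "phi (tau x) = tau (phi x)"
    and "phi (dinv x) = dinv (phi x)"
proof -
  show "phi (gam x) = gam (phi x)" "phi (tau x) = tau (phi x)"
    using phi_comm assms by blast+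
  have "dinv x \<in> Dr" "phi (dinv x) \<in> Dpr"
    using assms by simp_all
  then have "dlt (phi (dinv x)) = phi x"
    using phi_comm dlt_inv assms by (metis Dr_subset_Dpr)
  then show "phi (dinv x) = dinv (phi x)"
    using dlt_inv \<open>phi (dinv x) \<in> Dpr\<close> by metis
qed

lemma dinv_gam_tau1:
  assumes "x \<in> Dpr"
  shows "dinv (gam (tau1 x)) = tau1 (gam x)"
proof -
  have "gam (tau1 x) = dlt (tau1 (gam x))"
    using gam_tau assms by blast
  then have "dinv (gam (tau1 x)) = dinv (dlt (tau1 (gam x)))"
    by (rule arg_cong)
  also have "\<dots> = tau1 (gam x)"
    using assms by (intro conjunct1[OF dlt_inv[rule_format]]) simp
  finally show ?thesis .
qed

(* Simp normal form of dinv_gam_tau1; with it g o f = 0 and d1 o d0 = 0 hold by simp. *)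
lemma dinv_gam_tau[simp]:
  assumes "x \<in> Dpr"
  shows "dinv (gam (tau x)) = tau (gam x) - gam x + dinv (gam x)"
proof -
  have "dinv (gam (tau x)) = dinv (gam (tau1 x) + gam x)"
    using assms by simp
  also have "\<dots> = dinv (gam (tau1 x)) + dinv (gam x)"
    using assms by (intro dinv_add[rule_format]) simp_all
  also have "\<dots> = tau1 (gam x) + dinv (gam x)"
    by (simp only: dinv_gam_tau1[OF assms])
  finally show ?thesis .
qed

lemma koszul_g_f_zero: "m \<in> Dpr \<Longrightarrow> koszul_g (gam1 m) (tau1 m) = 0"
  by (simp add: algebra_simps)

lemma koszul_g_add:
  "a \<in> Dpr \<Longrightarrow> a' \<in> Dpr \<Longrightarrow> b \<in> Dpr \<Longrightarrow> b' \<in> Dpr \<Longrightarrow>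
    koszul_g (a + a') (b + b') = koszul_g a b + koszul_g a' b'"
  by (simp add: algebra_simps)

lemma phi1_koszul_g: "y \<in> Dr \<Longrightarrow> z \<in> Dr \<Longrightarrow> phi1 (koszul_g y z) = koszul_g (phi1 y) (phi1 z)"
  by (simp add: algebra_simps)

lemma M0_iff[simp]: "z \<in> M0 Dr phi \<longleftrightarrow> z \<in> Dr \<and> phi z = z"
  unfolding M0_def by blast

(* The admissible choices of (y_x, z_x) in the definition of delta_3. *)
definition phi_lift :: "'m \<Rightarrow> 'm \<Rightarrow> 'm \<Rightarrow> bool" where
  "phi_lift x y z \<longleftrightarrow> y \<in> Dr \<and> z \<in> Dr \<and> gam1 x = phi1 y \<and> tau1 x = phi1 z"

lemma phi_lift_add:
  assumes "x \<in> Dpr" "x' \<in> Dpr" "phi_lift x y z" "phi_lift x' y' z'"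
  shows "phi_lift (x + x') (y + y') (z + z')"
proof -
  have "gam1 (x + x') = gam1 x + gam1 x'" "tau1 (x + x') = tau1 x + tau1 x'"
    using assms(1,2) by (simp_all add: algebra_simps)
  moreover have "phi1 (y + y') = phi1 y + phi1 y'" "phi1 (z + z') = phi1 z + phi1 z'"
    using assms(3,4) unfolding phi_lift_def by (simp_all add: algebra_simps)
  ultimately show ?thesis
    using assms(3,4) unfolding phi_lift_def by simp
qed

lemma phi_lift_phi1: "u \<in> Dr \<Longrightarrow> phi_lift (phi1 u) (gam1 u) (tau1 u)"
  unfolding phi_lift_def by (simp add: algebra_simps)

lemma phi_lift_zero_iff: "phi_lift 0 y z \<longleftrightarrow> y \<in> M0 Dr phi \<and> z \<in> M0 Dr phi"
  unfolding phi_lift_def by auto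

lemma diff_mem_M0_iff:
  assumes "y \<in> Dr" "y' \<in> Dr"
  shows "y - y' \<in> M0 Dr phi \<longleftrightarrow> phi1 y = phi1 y'"
proof -
  have "y - y' \<in> M0 Dr phi \<longleftrightarrow> phi1 (y - y') = 0"
    using assms by simp
  also have "phi1 (y - y') = phi1 y - phi1 y'"
    using assms by (simp add: algebra_simps)
  finally show ?thesis
    by simp
qed

lemma phi_lift_unique_mod_M0:
  assumes "phi_lift x y z" "phi_lift x y' z'"
  shows "y - y' \<in> M0 Dr phi" "z - z' \<in> M0 Dr phi"
  using assms unfolding phi_lift_def by (metis diff_mem_M0_iff)+

lemma koszul_g_phi_lift_M0:
  assumes "x \<in> Dpr" "phi_lift x y z"
  shows "koszul_g y z \<in> M0 Dr phi"
proof -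
  have "phi1 (koszul_g y z) = koszul_g (phi1 y) (phi1 z)"
    using assms(2) unfolding phi_lift_def by (simp add: phi1_koszul_g)
  also have "\<dots> = koszul_g (gam1 x) (tau1 x)"
    using assms(2) unfolding phi_lift_def by simp
  also have "\<dots> = 0"
    using assms(1) by (rule koszul_g_f_zero)
  finally show ?thesis
    using assms(2) unfolding phi_lift_def by simp
qed

lemma subgrp_M0: "subgrp (M0 Dr phi)"
proof -
  have "M0 Dr phi = {z \<in> Dr. phi1 z \<in> {0}}"
    by auto
  also have "subgrp \<dots>"
    by (rule subgrp_vimage[OF Dr_grp subgrp_singleton_zero]) (simp add: additive_on_def)
  finally show ?thesis .
qed

lemma ImPhi_iff: "x \<in> ImPhi Dr phi \<longleftrightarrow> (\<exists>u\<in>Dr. x = phi1 u)"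
  unfolding ImPhi_def by blast

lemma phi1_mem_ImPhi: "u \<in> Dr \<Longrightarrow> phi1 u \<in> ImPhi Dr phi"
  unfolding ImPhi_iff by blast

lemma subgrp_ImPhi: "subgrp (ImPhi Dr phi)"
  unfolding ImPhi_def by (rule subgrp_image[OF Dr_grp]) (simp add: additive_on_def)

lemma subquot_H1M0: "subquot (Z_H1M0 Dr phi gam tau dinv) (B_H1M0 Dr phi gam tau)"
proof -
  have Z: "Z_H1M0 Dr phi gam tau dinv
      = {p \<in> M0 Dr phi \<times> M0 Dr phi. (\<lambda>(y, z). koszul_g y z) p \<in> {0}}"
    unfolding Z_H1M0_def by auto
  show ?thesis
    unfolding Z B_H1M0_def
    by (rule subquot_vimage_image[OF subgrp_M0 subgrp_Times[OF subgrp_M0 subgrp_M0]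
          subgrp_singleton_zero])
      (auto simp: additive_on_def koszul_g_f_zero)
qed

lemma subquot_H1tot: "subquot (Z_H1tot Dr Dpr phi gam tau dinv) (B_H1tot Dr phi gam tau)"
proof -
  have Z: "Z_H1tot Dr Dpr phi gam tau dinv = {t \<in> Dpr \<times> Dr \<times> Dr. d1 phi gam tau dinv t \<in> {0}}"
    unfolding Z_H1tot_def by (simp add: zero_prod_def)
  show ?thesis
    unfolding Z B_H1tot_def
    by (rule subquot_vimage_image[OF Dr_grp subgrp_Times[OF Dpr_grp subgrp_Times[OF Dr_grp Dr_grp]]
          subgrp_singleton_zero])
      (auto simp: additive_on_def d0_def d1_def zero_prod_def algebra_simps)
qed

lemma subquot_H0N: "subquot (Z_H0N Dr Dpr phi gam tau) (ImPhi Dr phi)"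
proof -
  have "(tau1 (phi1 u), gam1 (phi1 u)) \<in> ImPhi Dr phi \<times> ImPhi Dr phi" if "u \<in> Dr" for u
  proof -
    have "tau1 (phi1 u) = phi1 (tau1 u)" "gam1 (phi1 u) = phi1 (gam1 u)"
      using that by (simp_all add: algebra_simps)
    then show ?thesis
      unfolding mem_Times_iff fst_conv snd_conv using that
      by (simp only: phi1_mem_ImPhi operators_closed Dr_closed)
  qed
  then have "subquot {x \<in> Dpr. (tau1 x, gam1 x) \<in> ImPhi Dr phi \<times> ImPhi Dr phi} (phi1 ` Dr)"
    by (intro subquot_vimage_image[OF Dr_grp Dpr_grp subgrp_Times[OF subgrp_ImPhi subgrp_ImPhi]])
      (auto simp: additive_on_def)
  moreover have
    "{x \<in> Dpr. (tau1 x, gam1 x) \<in> ImPhi Dr phi \<times> ImPhi Dr phi} = Z_H0N Dr Dpr phi gam tau"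
    unfolding Z_H0N_def by auto
  ultimately show ?thesis
    by (simp add: ImPhi_def)
qed

lemma subquot_H2M0: "subquot (M0 Dr phi) (B_H2M0 Dr phi gam tau dinv)"
proof -
  have Z: "M0 Dr phi = {z \<in> Dr. phi1 z \<in> {0}}"
    by auto
  have B: "B_H2M0 Dr phi gam tau dinv = (\<lambda>(y, z). koszul_g y z) ` (M0 Dr phi \<times> M0 Dr phi)"
    unfolding B_H2M0_def by (auto simp del: M0_iff)
  show ?thesis
    unfolding B
    by (subst Z, rule subquot_vimage_image[OF subgrp_Times[OF subgrp_M0 subgrp_M0] Dr_grp
          subgrp_singleton_zero])
      (auto simp: additive_on_def phi1_koszul_g)
qed

lemma subquot_H2tot: "subquot (Z_H2tot Dr Dpr phi gam tau dinv) (B_H2tot Dr Dpr phi gam tau dinv)"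
proof -
  have Z: "Z_H2tot Dr Dpr phi gam tau dinv = {t \<in> Dpr \<times> Dpr \<times> Dr. d2 phi gam tau dinv t \<in> {0}}"
    unfolding Z_H2tot_def by simp
  show ?thesis
    unfolding Z B_H2tot_def
    by (rule subquot_vimage_image[OF subgrp_Times[OF Dpr_grp subgrp_Times[OF Dr_grp Dr_grp]]
          subgrp_Times[OF Dpr_grp subgrp_Times[OF Dpr_grp Dr_grp]] subgrp_singleton_zero])
      (auto simp: additive_on_def d1_def d2_def algebra_simps)
qed

lemma subquot_H1N: "subquot (Z_H1N Dr Dpr phi gam tau dinv) (B_H1N Dr Dpr phi gam tau)"
proof -
  have "koszul_g (gam1 m + phi1 u) (tau1 m + phi1 v) \<in> ImPhi Dr phi"
    if "m \<in> Dpr" "u \<in> Dr" "v \<in> Dr" for m u v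
  proof -
    have "koszul_g (gam1 m + phi1 u) (tau1 m + phi1 v)
        = koszul_g (gam1 m) (tau1 m) + koszul_g (phi1 u) (phi1 v)"
      using that by (intro koszul_g_add) simp_all
    also have "\<dots> = phi1 (koszul_g u v)"
      using that by (simp add: koszul_g_f_zero phi1_koszul_g)
    finally have eq: "koszul_g (gam1 m + phi1 u) (tau1 m + phi1 v) = phi1 (koszul_g u v)" .
    show ?thesis
      unfolding eq by (rule phi1_mem_ImPhi) (use that in simp)
  qed
  moreover have Z: "Z_H1N Dr Dpr phi gam tau dinv
      = {p \<in> Dpr \<times> Dpr. (\<lambda>(a, b). koszul_g a b) p \<in> ImPhi Dr phi}"
    unfolding Z_H1N_def by auto
  moreover have B: "B_H1N Dr Dpr phi gam tau
      = (\<lambda>(m, u, v). (gam1 m + phi1 u, tau1 m + phi1 v)) ` (Dpr \<times> Dr \<times> Dr)"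
    unfolding B_H1N_def by force
  ultimately show ?thesis
    unfolding Z B
    by (intro subquot_vimage_image[OF subgrp_Times[OF Dpr_grp subgrp_Times[OF Dr_grp Dr_grp]]
          subgrp_Times[OF Dpr_grp Dpr_grp] subgrp_ImPhi])
      (auto simp: additive_on_def algebra_simps)
qed

lemma Z_H1M0_iff:
  "(y, z) \<in> Z_H1M0 Dr phi gam tau dinv \<longleftrightarrow> y \<in> M0 Dr phi \<and> z \<in> M0 Dr phi \<and> koszul_g y z = 0"
  unfolding Z_H1M0_def by blast

lemma B_H1M0_iff: "p \<in> B_H1M0 Dr phi gam tau \<longleftrightarrow> (\<exists>m\<in>M0 Dr phi. p = (gam1 m, tau1 m))"
  unfolding B_H1M0_def by blast

lemma Z_H1tot_iff:
  "(a, b, c) \<in> Z_H1tot Dr Dpr phi gam tau dinv \<longleftrightarrow> a \<in> Dpr \<and> phi_lift a b c \<and> koszul_g b c = 0"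
proof -
  have "gam1 a + (b - phi b) = 0 \<longleftrightarrow> gam1 a = phi1 b" "tau1 a + (c - phi c) = 0 \<longleftrightarrow> tau1 a = phi1 c"
    by (simp_all add: add_eq_0_iff2)
  then show ?thesis
    unfolding Z_H1tot_def d1_def phi_lift_def by auto
qed

lemma B_H1tot_iff: "t \<in> B_H1tot Dr phi gam tau \<longleftrightarrow> (\<exists>u\<in>Dr. t = (phi1 u, gam1 u, tau1 u))"
  unfolding B_H1tot_def d0_def by blast

lemma Z_H0N_iff: "x \<in> Z_H0N Dr Dpr phi gam tau \<longleftrightarrow> x \<in> Dpr \<and> (\<exists>y z. phi_lift x y z)"
  unfolding Z_H0N_def phi_lift_def ImPhi_iff by blast

lemma R3_iff: "R3 Dr phi gam tau dinv x w \<longleftrightarrow> (\<exists>y z. phi_lift x y z \<and> w = koszul_g y z)"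
  unfolding R3_def phi_lift_def by blast

lemma B_H2M0_iff: "w \<in> B_H2M0 Dr phi gam tau dinv \<longleftrightarrow> (\<exists>y\<in>M0 Dr phi. \<exists>z\<in>M0 Dr phi. w = koszul_g y z)"
  unfolding B_H2M0_def by blast

lemma Z_H2tot_iff:
  "(a, b, c) \<in> Z_H2tot Dr Dpr phi gam tau dinv
    \<longleftrightarrow> a \<in> Dpr \<and> b \<in> Dpr \<and> c \<in> Dr \<and> koszul_g a b + phi1 c = 0"
  unfolding Z_H2tot_def d2_def by simp

lemma B_H2tot_iff:
  "t \<in> B_H2tot Dr Dpr phi gam tau dinv
    \<longleftrightarrow> (\<exists>a\<in>Dpr. \<exists>b\<in>Dr. \<exists>c\<in>Dr. t = (gam1 a - phi1 b, tau1 a - phi1 c, koszul_g b c))"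
proof -
  have d1_eq: "d1 phi gam tau dinv (a, b, c) = (gam1 a - phi1 b, tau1 a - phi1 c, koszul_g b c)"
    for a b c
    unfolding d1_def by (simp add: algebra_simps)
  show ?thesis
    unfolding B_H2tot_def by (auto simp: image_iff d1_eq)
qed

lemma Z_H1N_iff:
  "(a, b) \<in> Z_H1N Dr Dpr phi gam tau dinv \<longleftrightarrow> a \<in> Dpr \<and> b \<in> Dpr \<and> koszul_g a b \<in> ImPhi Dr phi"
  unfolding Z_H1N_def by simp

lemma B_H1N_iff:
  "p \<in> B_H1N Dr Dpr phi gam tau
    \<longleftrightarrow> (\<exists>m\<in>Dpr. \<exists>u\<in>Dr. \<exists>v\<in>Dr. p = (gam1 m + phi1 u, tau1 m + phi1 v))"
  unfolding B_H1N_def by blast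

lemma zero_fst_mem_Z_H1tot_iff:
  "(0, y, z) \<in> Z_H1tot Dr Dpr phi gam tau dinv \<longleftrightarrow> (y, z) \<in> Z_H1M0 Dr phi gam tau dinv"
  unfolding Z_H1tot_iff Z_H1M0_iff phi_lift_zero_iff by simp

lemma zero_fst_mem_B_H1tot_iff:
  "(0, y, z) \<in> B_H1tot Dr phi gam tau \<longleftrightarrow> (y, z) \<in> B_H1M0 Dr phi gam tau"
  unfolding B_H1tot_iff B_H1M0_iff by auto

lemma zero_zero_mem_Z_H2tot_iff: "(0, 0, z) \<in> Z_H2tot Dr Dpr phi gam tau dinv \<longleftrightarrow> z \<in> M0 Dr phi"
  unfolding Z_H2tot_iff by auto

lemma zero_zero_mem_B_H2tot_iff:
  "(0, 0, w) \<in> B_H2tot Dr Dpr phi gam tau dinv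
    \<longleftrightarrow> (\<exists>x\<in>Z_H0N Dr Dpr phi gam tau. R3 Dr phi gam tau dinv x w)"
proof
  assume "(0, 0, w) \<in> B_H2tot Dr Dpr phi gam tau dinv"
  then obtain a b c where "a \<in> Dpr" "phi_lift a b c" "w = koszul_g b c"
    unfolding B_H2tot_iff phi_lift_def by auto
  then show "\<exists>x\<in>Z_H0N Dr Dpr phi gam tau. R3 Dr phi gam tau dinv x w"
    using Z_H0N_iff R3_iff by blast
next
  assume "\<exists>x\<in>Z_H0N Dr Dpr phi gam tau. R3 Dr phi gam tau dinv x w"
  then obtain x y z where "x \<in> Dpr" "phi_lift x y z" "w = koszul_g y z"
    using Z_H0N_iff R3_iff by blast
  then show "(0, 0, w) \<in> B_H2tot Dr Dpr phi gam tau dinv"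
    unfolding B_H2tot_iff phi_lift_def by auto
qed

lemma B_H2M0_iff_R3_zero: "w \<in> B_H2M0 Dr phi gam tau dinv \<longleftrightarrow> R3 Dr phi gam tau dinv 0 w"
  unfolding B_H2M0_iff R3_iff phi_lift_zero_iff by blast

lemma R3_add:
  assumes "x \<in> Dpr" "x' \<in> Dpr" "R3 Dr phi gam tau dinv x w" "R3 Dr phi gam tau dinv x' w'"
  shows "R3 Dr phi gam tau dinv (x + x') (w + w')"
proof -
  obtain y z y' z' where lifts: "phi_lift x y z" "phi_lift x' y' z'"
    and "w = koszul_g y z" "w' = koszul_g y' z'"
    using assms(3,4) unfolding R3_iff by blast
  then have "w + w' = koszul_g (y + y') (z + z')"
    using koszul_g_add unfolding phi_lift_def by simp
  then show ?thesis
    unfolding R3_iff using phi_lift_add[OF assms(1,2) lifts] by blast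
qed

lemma R3_add_B_H2M0:
  "x \<in> Dpr \<Longrightarrow> R3 Dr phi gam tau dinv x w \<Longrightarrow> b \<in> B_H2M0 Dr phi gam tau dinv
    \<Longrightarrow> R3 Dr phi gam tau dinv x (w + b)"
  using R3_add[of x 0 w b] B_H2M0_iff_R3_zero by simp

lemma R3_zero_iff:
  "x \<in> Dpr \<Longrightarrow> R3 Dr phi gam tau dinv x 0 \<longleftrightarrow> (\<exists>y z. (x, y, z) \<in> Z_H1tot Dr Dpr phi gam tau dinv)"
  unfolding R3_iff Z_H1tot_iff by auto

lemma R3_diff_mem_B_H2M0:
  assumes "x \<in> Dpr" "x' \<in> Dpr" "x - x' \<in> ImPhi Dr phi"
    and "R3 Dr phi gam tau dinv x w" "R3 Dr phi gam tau dinv x' w'"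
  shows "w - w' \<in> B_H2M0 Dr phi gam tau dinv"
proof -
  obtain y z y' z' where lifts: "phi_lift x y z" "phi_lift x' y' z'"
    and w: "w = koszul_g y z" "w' = koszul_g y' z'"
    using assms(4,5) unfolding R3_iff by blast
  obtain u where u: "u \<in> Dr" "x = x' + phi1 u"
    using assms(3) unfolding ImPhi_iff by (auto simp: algebra_simps)
  have "phi_lift x (y' + gam1 u) (z' + tau1 u)"
    unfolding u(2) using phi_lift_add[OF assms(2) _ lifts(2) phi_lift_phi1[OF u(1)]] u(1) by simp
  then have M0: "y - (y' + gam1 u) \<in> M0 Dr phi" "z - (z' + tau1 u) \<in> M0 Dr phi"
    using phi_lift_unique_mod_M0 lifts(1) by blast+
  have "w - w' = koszul_g (y - (y' + gam1 u)) (z - (z' + tau1 u)) + koszul_g (gam1 u) (tau1 u)"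
    unfolding w using lifts u(1) unfolding phi_lift_def by (simp add: algebra_simps)
  also have "\<dots> = koszul_g (y - (y' + gam1 u)) (z - (z' + tau1 u))"
    using u(1) by (simp add: koszul_g_f_zero)
  finally show ?thesis
    unfolding B_H2M0_iff using M0 by blast
qed

lemma B_H2tot_truncate_mem_B_H1N:
  "t \<in> B_H2tot Dr Dpr phi gam tau dinv \<Longrightarrow> (fst t, fst (snd t)) \<in> B_H1N Dr Dpr phi gam tau"
proof -
  assume "t \<in> B_H2tot Dr Dpr phi gam tau dinv"
  then obtain a b c where "a \<in> Dpr" "b \<in> Dr" "c \<in> Dr"
    and "t = (gam1 a - phi1 b, tau1 a - phi1 c, koszul_g b c)"
    unfolding B_H2tot_iff by blast
  then show ?thesis
    unfolding B_H1N_iff by (intro bexI[of _ a] bexI[of _ "- b"] bexI[of _ "- c"]) simp_all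
qed

lemma delta1_well_defined:
  "wd_map (Z_H1M0 Dr phi gam tau dinv) (B_H1M0 Dr phi gam tau)
     (Z_H1tot Dr Dpr phi gam tau dinv) (B_H1tot Dr phi gam tau) R1"
  by (rule wd_map_graph[OF subquot_H1M0 subquot_H1tot, where F = "\<lambda>p. (0, fst p, snd p)"])
    (auto simp: additive_on_def R1_def zero_fst_mem_Z_H1tot_iff zero_fst_mem_B_H1tot_iff)

lemma delta2_well_defined:
  "wd_map (Z_H1tot Dr Dpr phi gam tau dinv) (B_H1tot Dr phi gam tau)
     (Z_H0N Dr Dpr phi gam tau) (ImPhi Dr phi) R2"
  by (rule wd_map_graph[OF subquot_H1tot subquot_H0N, where F = fst])
    (fastforce simp: additive_on_def R2_def Z_H1tot_iff Z_H0N_iff B_H1tot_iff phi1_mem_ImPhi)+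

lemma delta3_well_defined:
  "wd_map (Z_H0N Dr Dpr phi gam tau) (ImPhi Dr phi)
     (M0 Dr phi) (B_H2M0 Dr phi gam tau dinv) (R3 Dr phi gam tau dinv)"
  unfolding wd_map_def
proof (intro conjI subquot_H0N subquot_H2M0 ballI allI impI)
  fix x assume "x \<in> Z_H0N Dr Dpr phi gam tau"
  then show "\<exists>w. R3 Dr phi gam tau dinv x w"
    unfolding Z_H0N_iff R3_iff by blast
next
  fix x w assume "x \<in> Z_H0N Dr Dpr phi gam tau" "R3 Dr phi gam tau dinv x w"
  then show "w \<in> M0 Dr phi"
    unfolding Z_H0N_iff R3_iff using koszul_g_phi_lift_M0 by blast
next
  fix x x' w w'
  assume "x \<in> Z_H0N Dr Dpr phi gam tau" "x' \<in> Z_H0N Dr Dpr phi gam tau"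
    and "R3 Dr phi gam tau dinv x w \<and> R3 Dr phi gam tau dinv x' w' \<and> x - x' \<in> ImPhi Dr phi"
  then show "w - w' \<in> B_H2M0 Dr phi gam tau dinv"
    unfolding Z_H0N_iff using R3_diff_mem_B_H2M0 by blast
next
  fix x x' w w'
  assume "x \<in> Z_H0N Dr Dpr phi gam tau" "x' \<in> Z_H0N Dr Dpr phi gam tau"
    and "R3 Dr phi gam tau dinv x w \<and> R3 Dr phi gam tau dinv x' w'"
  then show "R3 Dr phi gam tau dinv (x + x') (w + w')"
    unfolding Z_H0N_iff using R3_add by blast
qed

lemma delta4_well_defined:
  "wd_map (M0 Dr phi) (B_H2M0 Dr phi gam tau dinv)
     (Z_H2tot Dr Dpr phi gam tau dinv) (B_H2tot Dr Dpr phi gam tau dinv) R4"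
proof (rule wd_map_graph[OF subquot_H2M0 subquot_H2tot, where F = "\<lambda>z. (0, 0, z)"])
  show "(\<lambda>z. (0, 0, z)) ` B_H2M0 Dr phi gam tau dinv \<subseteq> B_H2tot Dr Dpr phi gam tau dinv"
  proof clarify
    fix w assume "w \<in> B_H2M0 Dr phi gam tau dinv"
    then have "R3 Dr phi gam tau dinv 0 w"
      unfolding B_H2M0_iff_R3_zero .
    moreover have "0 \<in> Z_H0N Dr Dpr phi gam tau"
      using subquot_H0N subgrp_zero unfolding subquot_def by blast
    ultimately show "(0, 0, w) \<in> B_H2tot Dr Dpr phi gam tau dinv"
      unfolding zero_zero_mem_B_H2tot_iff by blast
  qed
qed (auto simp: additive_on_def R4_def zero_zero_mem_Z_H2tot_iff)

lemma delta5_well_defined: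
  "wd_map (Z_H2tot Dr Dpr phi gam tau dinv) (B_H2tot Dr Dpr phi gam tau dinv)
     (Z_H1N Dr Dpr phi gam tau dinv) (B_H1N Dr Dpr phi gam tau) R5"
proof (rule wd_map_graph[OF subquot_H2tot subquot_H1N, where F = "\<lambda>t. (fst t, fst (snd t))"])
  show "(\<lambda>t. (fst t, fst (snd t))) ` Z_H2tot Dr Dpr phi gam tau dinv
      \<subseteq> Z_H1N Dr Dpr phi gam tau dinv"
  proof
    fix p assume "p \<in> (\<lambda>t. (fst t, fst (snd t))) ` Z_H2tot Dr Dpr phi gam tau dinv"
    then obtain a b c where "(a, b, c) \<in> Z_H2tot Dr Dpr phi gam tau dinv" and p: "p = (a, b)"
      by force
    then have "a \<in> Dpr" "b \<in> Dpr" "- c \<in> Dr" "koszul_g a b = phi1 (- c)"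
      unfolding Z_H2tot_iff by (auto simp: add_eq_0_iff2)
    then show "p \<in> Z_H1N Dr Dpr phi gam tau dinv"
      unfolding p Z_H1N_iff ImPhi_iff by blast
  qed
qed (auto simp: additive_on_def R5_def dest: B_H2tot_truncate_mem_B_H1N)

lemma delta1_injective:
  "inj_cls (Z_H1M0 Dr phi gam tau dinv) (B_H1M0 Dr phi gam tau) (B_H1tot Dr phi gam tau) R1"
  unfolding inj_cls_def R1_def by (auto simp: zero_fst_mem_B_H1tot_iff)

lemma delta5_surjective:
  "surj_cls (Z_H2tot Dr Dpr phi gam tau dinv) (Z_H1N Dr Dpr phi gam tau dinv)
     (B_H1N Dr Dpr phi gam tau) R5"
  unfolding surj_cls_def
proof clarify
  fix a b assume "(a, b) \<in> Z_H1N Dr Dpr phi gam tau dinv"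
  then obtain u where "a \<in> Dpr" "b \<in> Dpr" "u \<in> Dr" "koszul_g a b = phi1 u"
    unfolding Z_H1N_iff ImPhi_iff by blast
  then have "(a, b, - u) \<in> Z_H2tot Dr Dpr phi gam tau dinv"
    unfolding Z_H2tot_iff by simp
  moreover have "(a, b) - (a, b) \<in> B_H1N Dr Dpr phi gam tau"
    using subquot_H1N subgrp_zero unfolding subquot_def by auto
  ultimately show "\<exists>t\<in>Z_H2tot Dr Dpr phi gam tau dinv.
      \<exists>w'. R5 t w' \<and> (a, b) - w' \<in> B_H1N Dr Dpr phi gam tau"
    unfolding R5_def by (intro bexI[of _ "(a, b, - u)"]) simp_all
qed

lemma exact_at_H1tot:
  "exact_at (Z_H1M0 Dr phi gam tau dinv) R1
     (Z_H1tot Dr Dpr phi gam tau dinv) (B_H1tot Dr phi gam tau) R2 (ImPhi Dr phi)"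
proof (rule exact_atI)
  fix t w assume t: "t \<in> Z_H1tot Dr Dpr phi gam tau dinv" and "R2 t w" "w \<in> ImPhi Dr phi"
  then obtain u where u: "u \<in> Dr" "fst t = phi1 u"
    unfolding R2_def ImPhi_iff by blast
  define d where "d = (phi1 u, gam1 u, tau1 u)"
  have d: "d \<in> B_H1tot Dr phi gam tau"
    unfolding d_def B_H1tot_iff using u(1) by blast
  obtain y z where yz: "t - d = (0, y, z)"
    using u(2) unfolding d_def by (cases t) auto
  have "(0, y, z) \<in> Z_H1tot Dr Dpr phi gam tau dinv"
    unfolding yz[symmetric] using subquot_diff_mem[OF subquot_H1tot t d] .
  moreover have "t - (0, y, z) = d"
    unfolding yz[symmetric] by simp
  ultimately show "\<exists>x\<in>Z_H1M0 Dr phi gam tau dinv.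
      \<exists>t'. R1 x t' \<and> t - t' \<in> B_H1tot Dr phi gam tau"
    unfolding R1_def zero_fst_mem_Z_H1tot_iff using d by force
next
  fix t x t'
  assume "R1 x t'" "t - t' \<in> B_H1tot Dr phi gam tau"
  then obtain u where "u \<in> Dr" "t - (0, fst x, snd x) = (phi1 u, gam1 u, tau1 u)"
    unfolding R1_def B_H1tot_iff by blast
  then have "fst t = phi1 u" "u \<in> Dr"
    by (auto simp: prod_eq_iff)
  then show "\<exists>w. R2 t w \<and> w \<in> ImPhi Dr phi"
    unfolding R2_def using phi1_mem_ImPhi by simp
qed

lemma exact_at_H0N:
  "exact_at (Z_H1tot Dr Dpr phi gam tau dinv) R2
     (Z_H0N Dr Dpr phi gam tau) (ImPhi Dr phi)
     (R3 Dr phi gam tau dinv) (B_H2M0 Dr phi gam tau dinv)"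
proof (rule exact_atI)
  fix x w assume x: "x \<in> Z_H0N Dr Dpr phi gam tau"
    and "R3 Dr phi gam tau dinv x w" "w \<in> B_H2M0 Dr phi gam tau dinv"
  then have "R3 Dr phi gam tau dinv x (w + - w)"
    using R3_add_B_H2M0 subquot_uminus_mem[OF subquot_H2M0] Z_H0N_iff by blast
  then obtain y z where "(x, y, z) \<in> Z_H1tot Dr Dpr phi gam tau dinv"
    using R3_zero_iff x Z_H0N_iff by auto
  then show "\<exists>t\<in>Z_H1tot Dr Dpr phi gam tau dinv. \<exists>x'. R2 t x' \<and> x - x' \<in> ImPhi Dr phi"
    unfolding R2_def using subquot_zero_mem[OF subquot_H0N] by force
next
  fix x t x'
  assume x: "x \<in> Z_H0N Dr Dpr phi gam tau" and t: "t \<in> Z_H1tot Dr Dpr phi gam tau dinv"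
    and "R2 t x'" "x - x' \<in> ImPhi Dr phi"
  then obtain u where u: "u \<in> Dr" "x - fst t = phi1 u"
    unfolding R2_def ImPhi_iff by blast
  have "t + (phi1 u, gam1 u, tau1 u) \<in> Z_H1tot Dr Dpr phi gam tau dinv"
    using subquot_add_mem[OF subquot_H1tot t] u(1) unfolding B_H1tot_iff by blast
  moreover have "fst (t + (phi1 u, gam1 u, tau1 u)) = x"
    using u(2) by (simp add: algebra_simps)
  ultimately obtain y z where "(x, y, z) \<in> Z_H1tot Dr Dpr phi gam tau dinv"
    by (metis prod.collapse)
  then have "R3 Dr phi gam tau dinv x 0"
    using R3_zero_iff x Z_H0N_iff by blast
  then show "\<exists>w. R3 Dr phi gam tau dinv x w \<and> w \<in> B_H2M0 Dr phi gam tau dinv"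
    using subquot_zero_mem[OF subquot_H2M0] by blast
qed

lemma exact_at_H2M0:
  "exact_at (Z_H0N Dr Dpr phi gam tau) (R3 Dr phi gam tau dinv)
     (M0 Dr phi) (B_H2M0 Dr phi gam tau dinv) R4 (B_H2tot Dr Dpr phi gam tau dinv)"
proof (rule exact_atI)
  fix z t assume "R4 z t" "t \<in> B_H2tot Dr Dpr phi gam tau dinv"
  then have "(0, 0, z) \<in> B_H2tot Dr Dpr phi gam tau dinv"
    unfolding R4_def by simp
  then obtain x where "x \<in> Z_H0N Dr Dpr phi gam tau" "R3 Dr phi gam tau dinv x z"
    unfolding zero_zero_mem_B_H2tot_iff by blast
  then show "\<exists>x\<in>Z_H0N Dr Dpr phi gam tau.
      \<exists>w. R3 Dr phi gam tau dinv x w \<and> z - w \<in> B_H2M0 Dr phi gam tau dinv"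
    using subquot_zero_mem[OF subquot_H2M0] by force
next
  fix z x w
  assume x: "x \<in> Z_H0N Dr Dpr phi gam tau"
    and "R3 Dr phi gam tau dinv x w" "z - w \<in> B_H2M0 Dr phi gam tau dinv"
  then have "R3 Dr phi gam tau dinv x (w + (z - w))"
    using R3_add_B_H2M0 Z_H0N_iff by blast
  then have "(0, 0, z) \<in> B_H2tot Dr Dpr phi gam tau dinv"
    unfolding zero_zero_mem_B_H2tot_iff using x by auto
  then show "\<exists>t. R4 z t \<and> t \<in> B_H2tot Dr Dpr phi gam tau dinv"
    unfolding R4_def by blast
qed

lemma exact_at_H2tot:
  "exact_at (M0 Dr phi) R4
     (Z_H2tot Dr Dpr phi gam tau dinv) (B_H2tot Dr Dpr phi gam tau dinv)
     R5 (B_H1N Dr Dpr phi gam tau)"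
proof (rule exact_atI)
  fix t p assume t: "t \<in> Z_H2tot Dr Dpr phi gam tau dinv"
    and "R5 t p" "p \<in> B_H1N Dr Dpr phi gam tau"
  then obtain m u v where muv: "m \<in> Dpr" "u \<in> Dr" "v \<in> Dr"
    and t12: "fst t = gam1 m + phi1 u" "fst (snd t) = tau1 m + phi1 v"
    unfolding R5_def B_H1N_iff by auto
  define d where "d = (gam1 m - phi1 (- u), tau1 m - phi1 (- v), koszul_g (- u) (- v))"
  have d: "d \<in> B_H2tot Dr Dpr phi gam tau dinv"
    unfolding d_def B_H2tot_iff using muv
    by (intro bexI[of _ m] bexI[of _ "- u"] bexI[of _ "- v"]) simp_all
  obtain z where z: "t - d = (0, 0, z)"
    using t12 muv unfolding d_def by (cases t) auto
  have "(0, 0, z) \<in> Z_H2tot Dr Dpr phi gam tau dinv"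
    unfolding z[symmetric] using subquot_diff_mem[OF subquot_H2tot t d] .
  moreover have "t - (0, 0, z) = d"
    unfolding z[symmetric] by simp
  ultimately show "\<exists>z\<in>M0 Dr phi. \<exists>t'. R4 z t' \<and> t - t' \<in> B_H2tot Dr Dpr phi gam tau dinv"
    unfolding R4_def zero_zero_mem_Z_H2tot_iff using d by force
next
  fix t z t' assume "R4 z t'" "t - t' \<in> B_H2tot Dr Dpr phi gam tau dinv"
  then have "(fst t, fst (snd t)) \<in> B_H1N Dr Dpr phi gam tau"
    using B_H2tot_truncate_mem_B_H1N[of "t - t'"] unfolding R4_def by simp
  then show "\<exists>p. R5 t p \<and> p \<in> B_H1N Dr Dpr phi gam tau"
    unfolding R5_def by blast
qed

end

theorem proposition4p1:
  fixes Dr Dpr :: "'m::ab_group_add set"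
    and phi gam tau dlt dinv :: "'m \<Rightarrow> 'm"
  assumes Dr_grp: "subgrp Dr" and Dpr_grp: "subgrp Dpr" and incl: "Dr \<subseteq> Dpr"
    and gam_add: "\<forall>x\<in>Dpr. \<forall>y\<in>Dpr. gam (x + y) = gam x + gam y"
    and tau_add: "\<forall>x\<in>Dpr. \<forall>y\<in>Dpr. tau (x + y) = tau x + tau y"
    and dlt_add: "\<forall>x\<in>Dpr. \<forall>y\<in>Dpr. dlt (x + y) = dlt x + dlt y"
    and dinv_add: "\<forall>x\<in>Dpr. \<forall>y\<in>Dpr. dinv (x + y) = dinv x + dinv y"
    and phi_add: "\<forall>x\<in>Dr. \<forall>y\<in>Dr. phi (x + y) = phi x + phi y"
    and gam_Dr: "gam ` Dr \<subseteq> Dr" and gam_Dpr: "gam ` Dpr \<subseteq> Dpr"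
    and tau_Dr: "tau ` Dr \<subseteq> Dr" and tau_Dpr: "tau ` Dpr \<subseteq> Dpr"
    and dlt_Dr: "dlt ` Dr \<subseteq> Dr" and dlt_Dpr: "dlt ` Dpr \<subseteq> Dpr"
    and dinv_Dr: "dinv ` Dr \<subseteq> Dr" and dinv_Dpr: "dinv ` Dpr \<subseteq> Dpr"
    and phi_Dr: "phi ` Dr \<subseteq> Dpr"
    and dlt_inv: "\<forall>x\<in>Dpr. dinv (dlt x) = x \<and> dlt (dinv x) = x"
    and gam_tau: "\<forall>x\<in>Dpr. gam (tau x - x) = dlt (tau (gam x) - gam x)"
    and phi_comm: "\<forall>x\<in>Dr. phi (gam x) = gam (phi x) \<and> phi (tau x) = tau (phi x)
                          \<and> phi (dlt x) = dlt (phi x)"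
  shows
   "wd_map (Z_H1M0 Dr phi gam tau dinv) (B_H1M0 Dr phi gam tau)
           (Z_H1tot Dr Dpr phi gam tau dinv) (B_H1tot Dr phi gam tau) R1
  \<and> wd_map (Z_H1tot Dr Dpr phi gam tau dinv) (B_H1tot Dr phi gam tau)
           (Z_H0N Dr Dpr phi gam tau) (ImPhi Dr phi) R2
  \<and> wd_map (Z_H0N Dr Dpr phi gam tau) (ImPhi Dr phi)
           (M0 Dr phi) (B_H2M0 Dr phi gam tau dinv) (R3 Dr phi gam tau dinv)
  \<and> wd_map (M0 Dr phi) (B_H2M0 Dr phi gam tau dinv)
           (Z_H2tot Dr Dpr phi gam tau dinv) (B_H2tot Dr Dpr phi gam tau dinv) R4
  \<and> wd_map (Z_H2tot Dr Dpr phi gam tau dinv) (B_H2tot Dr Dpr phi gam tau dinv)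
           (Z_H1N Dr Dpr phi gam tau dinv) (B_H1N Dr Dpr phi gam tau) R5
  \<and> inj_cls (Z_H1M0 Dr phi gam tau dinv) (B_H1M0 Dr phi gam tau) (B_H1tot Dr phi gam tau) R1
  \<and> exact_at (Z_H1M0 Dr phi gam tau dinv) R1
           (Z_H1tot Dr Dpr phi gam tau dinv) (B_H1tot Dr phi gam tau) R2 (ImPhi Dr phi)
  \<and> exact_at (Z_H1tot Dr Dpr phi gam tau dinv) R2
           (Z_H0N Dr Dpr phi gam tau) (ImPhi Dr phi) (R3 Dr phi gam tau dinv)
           (B_H2M0 Dr phi gam tau dinv)
  \<and> exact_at (Z_H0N Dr Dpr phi gam tau) (R3 Dr phi gam tau dinv)
           (M0 Dr phi) (B_H2M0 Dr phi gam tau dinv) R4 (B_H2tot Dr Dpr phi gam tau dinv)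
  \<and> exact_at (M0 Dr phi) R4
           (Z_H2tot Dr Dpr phi gam tau dinv) (B_H2tot Dr Dpr phi gam tau dinv) R5
           (B_H1N Dr Dpr phi gam tau)
  \<and> surj_cls (Z_H2tot Dr Dpr phi gam tau dinv) (Z_H1N Dr Dpr phi gam tau dinv)
           (B_H1N Dr Dpr phi gam tau) R5"
proof -
  interpret phi_tau_module_pair Dr Dpr phi gam tau dlt dinv
    by (rule phi_tau_module_pair.intro) (fact assms)+
  show ?thesis
    by (intro conjI delta1_well_defined delta2_well_defined delta3_well_defined
        delta4_well_defined delta5_well_defined delta1_injective exact_at_H1tot exact_at_H0N
        exact_at_H2M0 exact_at_H2tot delta5_surjective)
qed

end
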